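(* Suppose that $(A_1,B_1)$ and $(A_2,B_2)$ are pairs of Gram mates (that are not necessarily square matrices). Then, we have the following pairs of Gram mates: $$\left(\begin{bmatrix} A_1 & 0\\ 0 & A_2 \end{bmatrix},\begin{bmatrix} B_1 & 0\\ 0 & B_2 \end{bmatrix}\right)\;\text{and}\;\left(\begin{bmatrix} A_1 & J\\ J & A_2 \end{bmatrix},\begin{bmatrix} B_1 & J\\ J & B_2 \end{bmatrix}\right).$$
   Context: $J$ denotes the all-ones matrix of the appropriate size. Two $(0,1)$ matrices $A\neq B$ are Gram mates if $AA^T=BB^T$ and $A^TA=B^TB$. *)

theory Defs
  imports "Jordan_Normal_Form.Matrix"
begin

definition all_ones_mat :: "nat \<Rightarrow> nat \<Rightarrow> int mat" where
  "all_ones_mat n m = mat n m (\<lambda>_. 1)"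

definition zero_one_mat :: "int mat \<Rightarrow> bool" where
  "zero_one_mat A \<longleftrightarrow> (\<forall>i < dim_row A. \<forall>j < dim_col A. A $$ (i, j) \<in> {0, 1})"

definition gram_mates :: "int mat \<Rightarrow> int mat \<Rightarrow> bool" where
  "gram_mates A B \<longleftrightarrow>
     dim_row A = dim_row B \<and> dim_col A = dim_col B \<and>
     zero_one_mat A \<and> zero_one_mat B \<and> A \<noteq> B \<and>
     A * transpose_mat A = B * transpose_mat B \<and>
     transpose_mat A * A = transpose_mat B * B"

end

theory Submission
  imports Defs
begin

text \<open>Multiplying out the blocks, the Gram matrices of the block matrices agree with those of
  the diagonal blocks except for off-diagonal products such as \<open>A\<^sub>1 Y\<^sup>T\<close> and \<open>X A\<^sub>2\<^sup>T\<close>.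
  These vanish for zero blocks. For all-ones blocks they only record the row and column sums of
  \<open>A\<^sub>i\<close>, and for a (0,1) matrix these are the diagonal entries of \<open>A A\<^sup>T\<close> and \<open>A\<^sup>T A\<close>,
  which Gram mates share.\<close>

lemma zero_one_mat_transpose [simp]: "zero_one_mat (transpose_mat A) = zero_one_mat A"
  unfolding zero_one_mat_def by auto

lemma zero_one_mat_zero_mat [simp]: "zero_one_mat (0\<^sub>m n m)"
  unfolding zero_one_mat_def by simp

lemma zero_one_mat_all_ones_mat [simp]: "zero_one_mat (all_ones_mat n m)"
  unfolding zero_one_mat_def all_ones_mat_def by simp

lemma dim_all_ones_mat [simp]:
  "dim_row (all_ones_mat n m) = n" "dim_col (all_ones_mat n m) = m"
  unfolding all_ones_mat_def by simp_all

lemma all_ones_mat_carrier [simp]: "all_ones_mat n m \<in> carrier_mat n m"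
  by (simp add: carrier_matI)

lemma transpose_all_ones_mat [simp]: "transpose_mat (all_ones_mat n m) = all_ones_mat m n"
  unfolding all_ones_mat_def by (rule eq_matI) auto

lemma zero_one_four_block_mat:
  assumes "A \<in> carrier_mat r1 c1" "B \<in> carrier_mat r1 c2"
    and "C \<in> carrier_mat r2 c1" "D \<in> carrier_mat r2 c2"
    and "zero_one_mat A" "zero_one_mat B" "zero_one_mat C" "zero_one_mat D"
  shows "zero_one_mat (four_block_mat A B C D)"
  using assms unfolding zero_one_mat_def by auto

lemma four_block_mat_eq_imp_upper_left_eq:
  assumes "four_block_mat A B C D = four_block_mat A' B' C' D'"
    and "A \<in> carrier_mat r c" "A' \<in> carrier_mat r c"
  shows "A = A'"
proof (rule eq_matI)
  fix i j assume "i < dim_row A'" "j < dim_col A'"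
  then show "A $$ (i, j) = A' $$ (i, j)"
    using arg_cong[OF assms(1), of "\<lambda>M. M $$ (i, j)"] assms(2,3) by auto
qed (use assms(2,3) in auto)

lemma gram_mates_transpose:
  assumes "gram_mates A B"
  shows "gram_mates (transpose_mat A) (transpose_mat B)"
  using assms unfolding gram_mates_def
  by (metis index_transpose_mat(2,3) transpose_transpose zero_one_mat_transpose)

lemma zero_one_mat_mult_all_ones_mat:
  assumes "zero_one_mat A" "i < dim_row A" "j < n"
  shows "(A * all_ones_mat (dim_col A) n) $$ (i, j) = (A * transpose_mat A) $$ (i, i)"
proof -
  have "(A * all_ones_mat (dim_col A) n) $$ (i, j) = (\<Sum>k<dim_col A. A $$ (i, k))"
    using assms(2,3) by (simp add: all_ones_mat_def scalar_prod_def lessThan_atLeast0)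
  also have "\<dots> = (\<Sum>k<dim_col A. A $$ (i, k) * A $$ (i, k))"
    using assms(1,2) unfolding zero_one_mat_def by (intro sum.cong) force+
  also have "\<dots> = (A * transpose_mat A) $$ (i, i)"
    using assms(2) by (simp add: scalar_prod_def lessThan_atLeast0)
  finally show ?thesis .
qed

lemma gram_mates_mult_all_ones_mat:
  assumes "gram_mates A B"
  shows "A * all_ones_mat (dim_col A) n = B * all_ones_mat (dim_col A) n"
proof (rule eq_matI)
  have dims: "dim_row B = dim_row A" "dim_col B = dim_col A"
    and zero_one: "zero_one_mat A" "zero_one_mat B"
    and gram: "A * transpose_mat A = B * transpose_mat B"
    using assms unfolding gram_mates_def by auto
  fix i j
  assume "i < dim_row (B * all_ones_mat (dim_col A) n)" "j < dim_col (B * all_ones_mat (dim_col A) n)"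
  then have ij: "i < dim_row A" "j < n"
    by (simp_all add: dims)
  have "(A * all_ones_mat (dim_col A) n) $$ (i, j) = (A * transpose_mat A) $$ (i, i)"
    by (rule zero_one_mat_mult_all_ones_mat[OF zero_one(1) ij])
  also have "\<dots> = (B * all_ones_mat (dim_col B) n) $$ (i, j)"
    using zero_one_mat_mult_all_ones_mat[OF zero_one(2), of i j n] ij by (simp add: gram dims)
  finally show "(A * all_ones_mat (dim_col A) n) $$ (i, j) = (B * all_ones_mat (dim_col A) n) $$ (i, j)"
    by (simp add: dims)
qed (use assms in \<open>auto simp: gram_mates_def\<close>)

lemma four_block_mat_mult_transpose_eq:
  fixes A1 :: "'a :: comm_semiring_0 mat"
  assumes A1: "A1 \<in> carrier_mat r1 c1" and B1: "B1 \<in> carrier_mat r1 c1"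
    and A2: "A2 \<in> carrier_mat r2 c2" and B2: "B2 \<in> carrier_mat r2 c2"
    and X: "X \<in> carrier_mat r1 c2" and Y: "Y \<in> carrier_mat r2 c1"
    and gram1: "A1 * transpose_mat A1 = B1 * transpose_mat B1"
    and gram2: "A2 * transpose_mat A2 = B2 * transpose_mat B2"
    and AY: "A1 * transpose_mat Y = B1 * transpose_mat Y"
    and AX: "A2 * transpose_mat X = B2 * transpose_mat X"
  shows "four_block_mat A1 X Y A2 * transpose_mat (four_block_mat A1 X Y A2)
       = four_block_mat B1 X Y B2 * transpose_mat (four_block_mat B1 X Y B2)"
proof -
  have YA: "Y * transpose_mat A1 = Y * transpose_mat B1"
    using arg_cong[OF AY, of transpose_mat] transpose_mult[OF A1, of "transpose_mat Y"]
      transpose_mult[OF B1, of "transpose_mat Y"] Y by simp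
  have XA: "X * transpose_mat A2 = X * transpose_mat B2"
    using arg_cong[OF AX, of transpose_mat] transpose_mult[OF A2, of "transpose_mat X"]
      transpose_mult[OF B2, of "transpose_mat X"] X by simp
  show ?thesis
    using A1 B1 A2 B2 X Y
    by (simp add: transpose_four_block_mat mult_four_block_mat[of _ r1 c1 _ c2 _ r2]
        gram1 gram2 AY AX YA XA)
qed

lemma gram_mates_four_block_mat:
  assumes mates1: "gram_mates A1 B1" and mates2: "gram_mates A2 B2"
    and X: "X \<in> carrier_mat (dim_row A1) (dim_col A2)"
    and Y: "Y \<in> carrier_mat (dim_row A2) (dim_col A1)"
    and "zero_one_mat X" "zero_one_mat Y"
    and "A1 * transpose_mat Y = B1 * transpose_mat Y"
    and "A2 * transpose_mat X = B2 * transpose_mat X"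
    and "transpose_mat A1 * X = transpose_mat B1 * X"
    and "transpose_mat A2 * Y = transpose_mat B2 * Y"
  shows "gram_mates (four_block_mat A1 X Y A2) (four_block_mat B1 X Y B2)"
proof -
  define r1 c1 r2 c2 where "r1 = dim_row A1" "c1 = dim_col A1" "r2 = dim_row A2" "c2 = dim_col A2"
  have A1: "A1 \<in> carrier_mat r1 c1" and B1: "B1 \<in> carrier_mat r1 c1"
    and A2: "A2 \<in> carrier_mat r2 c2" and B2: "B2 \<in> carrier_mat r2 c2"
    using mates1 mates2 unfolding r1_c1_r2_c2_def gram_mates_def by auto
  from X Y have X: "X \<in> carrier_mat r1 c2" and Y: "Y \<in> carrier_mat r2 c1"
    unfolding r1_c1_r2_c2_def .
  have "four_block_mat A1 X Y A2 \<noteq> four_block_mat B1 X Y B2"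
    using four_block_mat_eq_imp_upper_left_eq[OF _ A1 B1] mates1 unfolding gram_mates_def by blast
  moreover have "zero_one_mat (four_block_mat A1 X Y A2)" "zero_one_mat (four_block_mat B1 X Y B2)"
    using A1 B1 A2 B2 X Y assms(5,6) mates1 mates2
    by (auto intro: zero_one_four_block_mat simp: gram_mates_def)
  moreover have "four_block_mat A1 X Y A2 * transpose_mat (four_block_mat A1 X Y A2)
      = four_block_mat B1 X Y B2 * transpose_mat (four_block_mat B1 X Y B2)"
    using four_block_mat_mult_transpose_eq[OF A1 B1 A2 B2 X Y] assms(7,8) mates1 mates2
    unfolding gram_mates_def by blast
  moreover have "transpose_mat (four_block_mat A1 X Y A2) * four_block_mat A1 X Y A2
      = transpose_mat (four_block_mat B1 X Y B2) * four_block_mat B1 X Y B2"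
    using four_block_mat_mult_transpose_eq[of "transpose_mat A1" c1 r1 "transpose_mat B1"
        "transpose_mat A2" c2 r2 "transpose_mat B2" "transpose_mat Y" "transpose_mat X"]
      A1 B1 A2 B2 X Y assms(9,10) mates1 mates2
    by (simp add: transpose_four_block_mat gram_mates_def)
  ultimately show ?thesis
    using A1 B1 A2 B2 unfolding gram_mates_def by auto
qed

theorem proposition5p2:
  fixes A1 B1 A2 B2 :: "int mat"
  assumes "gram_mates A1 B1" and "gram_mates A2 B2"
  shows "gram_mates
           (four_block_mat A1 (0\<^sub>m (dim_row A1) (dim_col A2)) (0\<^sub>m (dim_row A2) (dim_col A1)) A2)
           (four_block_mat B1 (0\<^sub>m (dim_row B1) (dim_col B2)) (0\<^sub>m (dim_row B2) (dim_col B1)) B2)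
       \<and> gram_mates
           (four_block_mat A1 (all_ones_mat (dim_row A1) (dim_col A2)) (all_ones_mat (dim_row A2) (dim_col A1)) A2)
           (four_block_mat B1 (all_ones_mat (dim_row B1) (dim_col B2)) (all_ones_mat (dim_row B2) (dim_col B1)) B2)"
proof -
  have dims: "dim_row B1 = dim_row A1" "dim_col B1 = dim_col A1"
    "dim_row B2 = dim_row A2" "dim_col B2 = dim_col A2"
    using assms unfolding gram_mates_def by auto
  have "gram_mates
           (four_block_mat A1 (0\<^sub>m (dim_row A1) (dim_col A2)) (0\<^sub>m (dim_row A2) (dim_col A1)) A2)
           (four_block_mat B1 (0\<^sub>m (dim_row A1) (dim_col A2)) (0\<^sub>m (dim_row A2) (dim_col A1)) B2)"
    by (rule gram_mates_four_block_mat[OF assms]) (simp_all add: dims)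
  moreover have "gram_mates
           (four_block_mat A1 (all_ones_mat (dim_row A1) (dim_col A2)) (all_ones_mat (dim_row A2) (dim_col A1)) A2)
           (four_block_mat B1 (all_ones_mat (dim_row A1) (dim_col A2)) (all_ones_mat (dim_row A2) (dim_col A1)) B2)"
    using gram_mates_mult_all_ones_mat[OF assms(1)] gram_mates_mult_all_ones_mat[OF assms(2)]
      gram_mates_mult_all_ones_mat[OF gram_mates_transpose[OF assms(1)]]
      gram_mates_mult_all_ones_mat[OF gram_mates_transpose[OF assms(2)]]
    by (intro gram_mates_four_block_mat[OF assms]) simp_all
  ultimately show ?thesis
    unfolding dims by (rule conjI)
qed

end
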